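(* Let ${\cal M}$ be a multiset of strings over $\Sigma$, let $L=\mathrm{colexBWT}({\cal M})$, and let $r_{OPT}$ be the minimum of $\mathrm{runs}(L')$ over all separator-based BWTs $L'$ of ${\cal M}$. Then $\mathrm{runs}(L)\le r_{OPT}+2c_{\cal M}$, where $c_{\cal M}$ is the number of interesting intervals of ${\cal M}$.
   Context: A run is a maximal substring consisting of one repeated character; $\mathrm{runs}(T)$ is the number of runs of $T$. $\Sigma$ is a finite ordered alphabet; $\#<\$<$ every character of $\Sigma$ and $\$_1<\cdots<\$_k<$ every character of $\Sigma$. $\mathrm{BWT}(T)$ is the concatenation of the last characters of the lexicographically sorted rotations of $T$. Omega-order: writing $S=\mathrm{root}(S)^{\exp(S)}$ with $\mathrm{root}(S)$ primitive, $S\prec_\omega T$ iff either $\mathrm{root}(S)=\mathrm{root}(T)$ and $\exp(S)<\exp(T)$, or $S^\omega<_{\mathrm{lex}}T^\omega$; $\mathrm{eBWT}$ of a multiset is the concatenation of last characters of all rotations of all its strings sorted in omega-order. For ${\cal M}=\{T_1,\ldots,T_k\}$ and a listing $(T_{\pi(1)},\ldots,T_{\pi(k)})$, the separator-based BWTs are: $\mathrm{dolEBWT}({\cal M})=\mathrm{eBWT}(\{T_i\$\})$; the mdolBWT of the listing, $\mathrm{BWT}(T_{\pi(1)}\$_1\cdots T_{\pi(k)}\$_k)$ with each $\$_j$ renamed $\$$; the concBWT of the listing, $\mathrm{BWT}(T_{\pi(1)}\$\cdots T_{\pi(k)}\$\#)$ with first character removed and $\#$ renamed $\$$; and $\mathrm{colexBWT}({\cal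 M})$, the mdolBWT of the listing of ${\cal M}$ in colexicographic order ($S<_{\mathrm{colex}}T$ iff reverse of $S$ $<_{\mathrm{lex}}$ reverse of $T$). Interesting intervals: with ${\cal R}$ the multiset of all rotations of the $T_i\$$ in lexicographic order, for $U\in\Sigma^*$ a suffix of at least two $T_i$ let $b=1+|\{R\in{\cal R}:R<_{\mathrm{lex}}U\$,\ U\$\text{ not a prefix of }R\}|$ and $e=b-1+|\{i:U\text{ suffix of }T_i\}|$; the character preceding the suffix occurrence of $U$ in $T_i$ is the one cyclically before it in $T_i\$$ ($\$$ if $U=T_i$); $[b,e]$ is interesting if some $i\neq j$ have $U$ as a suffix with different preceding characters. *)

theory Defs
  imports Main "HOL-Library.Multiset" "HOL-Library.List_Lexorder" "HOL-Library.Sublist"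
begin

text \<open>Hash is the end marker #, Dol 0 is the plain separator $, Dol j (j >= 1) is $_j,
  and Ch a is a character a of Sigma.\<close>

datatype 'a xchar = Hash | Dol nat | Ch 'a

fun le_xchar :: "'a::linorder xchar \<Rightarrow> 'a xchar \<Rightarrow> bool" where
  "le_xchar Hash _ = True"
| "le_xchar (Dol i) Hash = False"
| "le_xchar (Dol i) (Dol j) = (i \<le> j)"
| "le_xchar (Dol i) (Ch b) = True"
| "le_xchar (Ch a) Hash = False"
| "le_xchar (Ch a) (Dol j) = False"
| "le_xchar (Ch a) (Ch b) = (a \<le> b)"

instantiation xchar :: (linorder) linorder
begin
definition less_eq_xchar :: "'a xchar \<Rightarrow> 'a xchar \<Rightarrow> bool" where
  "less_eq_xchar x y = le_xchar x y"
definition less_xchar :: "'a xchar \<Rightarrow> 'a xchar \<Rightarrow> bool" where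
  "less_xchar x y = (le_xchar x y \<and> \<not> le_xchar y x)"
instance
proof
  fix x y z :: "'a xchar"
  show "(x < y) = (x \<le> y \<and> \<not> y \<le> x)" by (simp add: less_eq_xchar_def less_xchar_def)
  show "x \<le> x" by (cases x) (auto simp: less_eq_xchar_def)
  show "x \<le> y \<Longrightarrow> y \<le> z \<Longrightarrow> x \<le> z"
    by (cases x; cases y; cases z) (auto simp: less_eq_xchar_def)
  show "x \<le> y \<Longrightarrow> y \<le> x \<Longrightarrow> x = y"
    by (cases x; cases y) (auto simp: less_eq_xchar_def)
  show "x \<le> y \<or> y \<le> x"
    by (cases x; cases y) (auto simp: less_eq_xchar_def)
qed
end

definition runs :: "'b list \<Rightarrow> nat" where
  "runs T = length (remdups_adj T)"

definition rotations :: "'b list \<Rightarrow> 'b list list" where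
  "rotations T = map (\<lambda>i. rotate i T) [0..<length T]"

definition bwt :: "'b::linorder list \<Rightarrow> 'b list" where
  "bwt T = map last (sort (rotations T))"

definition primitive :: "'b list \<Rightarrow> bool" where
  "primitive S \<longleftrightarrow> S \<noteq> [] \<and> \<not> (\<exists>u k. k \<ge> 2 \<and> S = concat (replicate k u))"

definition root :: "'b list \<Rightarrow> 'b list" where
  "root S = (THE u. primitive u \<and> (\<exists>k. S = concat (replicate k u)))"

definition expo :: "'b list \<Rightarrow> nat" where
  "expo S = length S div length (root S)"

definition omega :: "'b list \<Rightarrow> nat \<Rightarrow> 'b" where
  "omega S i = S ! (i mod length S)"

definition lex_less_inf :: "(nat \<Rightarrow> 'b::linorder) \<Rightarrow> (nat \<Rightarrow> 'b) \<Rightarrow> bool" where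
  "lex_less_inf f g \<longleftrightarrow> (\<exists>n. (\<forall>i<n. f i = g i) \<and> f n < g n)"

definition omega_less :: "'b::linorder list \<Rightarrow> 'b list \<Rightarrow> bool" where
  "omega_less S T \<longleftrightarrow> (root S = root T \<and> expo S < expo T) \<or> lex_less_inf (omega S) (omega T)"

definition is_ebwt :: "'b::linorder list multiset \<Rightarrow> 'b list \<Rightarrow> bool" where
  "is_ebwt Ss L \<longleftrightarrow> (\<exists>xs. mset xs = (\<Sum>S\<in>#Ss. mset (rotations S))
      \<and> sorted_wrt (\<lambda>a b. \<not> omega_less b a) xs \<and> L = map last xs)"

definition dol_str :: "'a list \<Rightarrow> 'a xchar list" where
  "dol_str T = map Ch T @ [Dol 0]"

definition ren_dol :: "'a xchar \<Rightarrow> 'a xchar" where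
  "ren_dol c = (case c of Dol _ \<Rightarrow> Dol 0 | _ \<Rightarrow> c)"

definition ren_hash :: "'a xchar \<Rightarrow> 'a xchar" where
  "ren_hash c = (case c of Hash \<Rightarrow> Dol 0 | _ \<Rightarrow> c)"

definition is_dolEBWT :: "'a::linorder list multiset \<Rightarrow> 'a xchar list \<Rightarrow> bool" where
  "is_dolEBWT M L \<longleftrightarrow> is_ebwt (image_mset dol_str M) L"

definition mdolBWT :: "'a::linorder list list \<Rightarrow> 'a xchar list" where
  "mdolBWT xs = map ren_dol
     (bwt (concat (map (\<lambda>(j, T). map Ch T @ [Dol (Suc j)]) (enumerate 0 xs))))"

definition concBWT :: "'a::linorder list list \<Rightarrow> 'a xchar list" where
  "concBWT xs = map ren_hash (tl (bwt (concat (map dol_str xs) @ [Hash])))"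

definition colex_listing :: "'a::linorder list multiset \<Rightarrow> 'a list list" where
  "colex_listing M = sort_key rev (sorted_list_of_multiset M)"

definition colexBWT :: "'a::linorder list multiset \<Rightarrow> 'a xchar list" where
  "colexBWT M = mdolBWT (colex_listing M)"

definition sep_bwts :: "'a::linorder list multiset \<Rightarrow> 'a xchar list set" where
  "sep_bwts M = {L. is_dolEBWT M L}
     \<union> {mdolBWT xs | xs. mset xs = M} \<union> {concBWT xs | xs. mset xs = M}"

definition r_opt :: "'a::linorder list multiset \<Rightarrow> nat" where
  "r_opt M = Min (runs ` sep_bwts M)"

definition all_rots :: "'a list multiset \<Rightarrow> 'a xchar list multiset" where
  "all_rots M = (\<Sum>T\<in>#M. mset (rotations (dol_str T)))"

text \<open>Character cyclically preceding the suffix occurrence of U in T $.\<close>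
definition prec_char :: "'a list \<Rightarrow> 'a list \<Rightarrow> 'a xchar" where
  "prec_char T U = (if U = T then Dol 0 else Ch (T ! (length T - length U - 1)))"

definition n_suff :: "'a list multiset \<Rightarrow> 'a list \<Rightarrow> nat" where
  "n_suff M U = size (filter_mset (\<lambda>T. suffix U T) M)"

definition int_b :: "'a::linorder list multiset \<Rightarrow> 'a list \<Rightarrow> nat" where
  "int_b M U = 1 + size (filter_mset (\<lambda>R. R < dol_str U \<and> \<not> prefix (dol_str U) R) (all_rots M))"

definition int_e :: "'a::linorder list multiset \<Rightarrow> 'a list \<Rightarrow> nat" where
  "int_e M U = int_b M U - 1 + n_suff M U"

definition interesting_intervals :: "'a::linorder list multiset \<Rightarrow> (nat \<times> nat) set" where
  "interesting_intervals M = {(int_b M U, int_e M U) | U.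
      n_suff M U \<ge> 2 \<and>
      (\<exists>T\<in>#M. \<exists>T'\<in>#M. suffix U T \<and> suffix U T' \<and> prec_char T U \<noteq> prec_char T' U)}"

definition c_M :: "'a::linorder list multiset \<Rightarrow> nat" where
  "c_M M = card (interesting_intervals M)"

end

theory Submission
  imports Defs "HOL-Library.Product_Lexorder"
begin

text \<open>Every separator-based BWT of the multiset lists, for each suffix U of each string T (the
  empty suffix included), the character cyclically preceding U in T$, with the suffixes in the
  order of the words U$; the variants differ only in how they order the entries that belong to
  the same suffix. The colexBWT numbers its separators in colexicographic order of the strings,
  which puts the entries of each suffix in the order of their characters. Cut a BWT into the
  blocks of equal suffixes: a sorted block has no more runs than any other arrangement of it,
  and sorting leaves a constant block unchanged, so extra runs can only arise where blocks
  meet, at most two for each block containing two different characters. These blocks are the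
  interesting intervals.\<close>

section \<open>Runs under blockwise sorting\<close>

lemma runs_Cons: "runs (x # Y) = (if Y \<noteq> [] \<and> x = hd Y then runs Y else Suc (runs Y))"
  by (cases Y) (auto simp: runs_def)

lemma runs_append:
  "runs (X @ Y) + of_bool (X \<noteq> [] \<and> Y \<noteq> [] \<and> last X = hd Y) = runs X + runs Y"
proof (induction X)
  case Nil
  then show ?case by (simp add: runs_def)
next
  case (Cons x X)
  then show ?case by (cases X) (simp_all add: runs_Cons)
qed

lemma runs_sorted: "sorted (H :: 'b::linorder list) \<Longrightarrow> runs H = card (set H)"
proof -
  assume "sorted H"
  then have "distinct (remdups_adj H)"
    by (induction H rule: remdups_adj.induct) (auto simp: order.strict_iff_order)
  then show ?thesis by (simp add: runs_def distinct_card[symmetric])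
qed

lemma card_set_le_runs: "card (set H) \<le> runs H"
  using card_length[of "remdups_adj H"] by (simp add: runs_def)

abbreviation nonconstant :: "'b list \<Rightarrow> bool" where
  "nonconstant G \<equiv> \<exists>a\<in>set G. \<exists>b\<in>set G. a \<noteq> b"

text \<open>The summand on the left pays for a constant block in front of the blocks, which merges
  with the first run of the original blocks but not with the first run of the sorted ones.\<close>
lemma runs_concat_sorted_blocks_strong:
  fixes Gs Hs :: "'b::linorder list list"
  assumes "list_all2 (\<lambda>G H. mset G = mset H \<and> sorted H) Gs Hs"
  shows "runs (concat Hs) + of_bool (hd (concat Gs) \<noteq> hd (concat Hs))
     \<le> runs (concat Gs) + 2 * length (filter nonconstant Gs)"
  using assms
proof (induction rule: list_all2_induct)
  case Nil
  then show ?case by simp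
next
  case (Cons G Gs H Hs)
  define A where "A = concat Gs"
  define B where "B = concat Hs"
  define c where "c = length (filter nonconstant Gs)"
  have IH: "runs B + of_bool (hd A \<noteq> hd B) \<le> runs A + 2 * c"
    using Cons.IH by (simp add: A_def B_def c_def)
  have "length A = length B"
    using Cons.hyps(2) unfolding A_def B_def
    by (induction rule: list_all2_induct) (auto dest: mset_eq_length)
  then have AB: "A = [] \<longleftrightarrow> B = []" by auto
  have GH: "mset G = mset H" "sorted H" using Cons.hyps(1) by auto
  then have setGH: "set G = set H" by (metis set_mset_mset)
  have GH_Nil: "G = [] \<longleftrightarrow> H = []" using GH(1) by auto
  have GA: "runs (G @ A) + of_bool (G \<noteq> [] \<and> A \<noteq> [] \<and> last G = hd A) = runs G + runs A"
    and HB: "runs (H @ B) + of_bool (H \<noteq> [] \<and> B \<noteq> [] \<and> last H = hd B) = runs H + runs B"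
    by (rule runs_append)+
  show ?case
  proof (cases "nonconstant G")
    case True
    have "runs H \<le> runs G"
      using runs_sorted[OF GH(2)] card_set_le_runs[of G] setGH by simp
    moreover have "runs (H @ B) \<le> runs H + runs B" "runs G + runs A \<le> runs (G @ A) + 1"
      using GA HB by (simp_all add: of_bool_def split: if_splits)
    ultimately show ?thesis using True IH
      by (simp add: A_def[symmetric] B_def[symmetric] c_def[symmetric] of_bool_def)
  next
    case nonconst: False
    show ?thesis
    proof (cases "G = []")
      case True
      with IH GH_Nil show ?thesis by (simp add: A_def B_def c_def)
    next
      case False
      then have "H = G" "last G = hd G"
        using nonconst setGH mset_eq_length[OF GH(1)]
        by (metis last_in_set list.set_sel(1) nth_equalityI nth_mem)+
      moreover have "runs (G @ B) \<le> runs (G @ A) + 2 * c"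
        using GA HB IH AB \<open>H = G\<close> \<open>last G = hd G\<close> False
        by (cases "A = []") (auto simp: of_bool_def split: if_splits)
      ultimately show ?thesis using nonconst False
        by (simp add: A_def[symmetric] B_def[symmetric] c_def[symmetric])
    qed
  qed
qed

lemma runs_concat_sorted_blocks:
  fixes Gs Hs :: "'b::linorder list list"
  assumes "list_all2 (\<lambda>G H. mset G = mset H \<and> sorted H) Gs Hs"
  shows "runs (concat Hs)
     \<le> runs (concat Gs) + 2 * length (filter nonconstant Gs)"
  using runs_concat_sorted_blocks_strong[OF assms] by linarith

definition multivalued_keys :: "('k \<times> 'v) set \<Rightarrow> 'k set" where
  "multivalued_keys A = {k. \<exists>a b. (k, a) \<in> A \<and> (k, b) \<in> A \<and> a \<noteq> b}"

lemma filter_least_key_append: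
  fixes xs :: "('k::linorder \<times> 'v) list"
  assumes "sorted (map fst xs)" "\<forall>x\<in>set xs. k \<le> fst x"
  shows "filter (\<lambda>x. fst x = k) xs @ filter (\<lambda>x. fst x \<noteq> k) xs = xs"
  using assms
proof (induction xs)
  case (Cons x xs)
  show ?case
  proof (cases "fst x = k")
    case True
    with Cons show ?thesis by simp
  next
    case False
    moreover have "fst x \<le> fst y" if "y \<in> set xs" for y
      using Cons.prems(1) that by simp
    ultimately have "\<forall>y\<in>set (x # xs). fst y \<noteq> k"
      using Cons.prems(2) by (auto dest: order.antisym)
    then show ?thesis by (simp add: filter_empty_conv)
  qed
qed simp

lemma concat_filter_keys:
  fixes xs :: "('k::linorder \<times> 'v) list"
  assumes "sorted (map fst xs)" "sorted K" "distinct K" "fst ` set xs \<subseteq> set K"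
  shows "concat (map (\<lambda>k. filter (\<lambda>x. fst x = k) xs) K) = xs"
  using assms
proof (induction K arbitrary: xs)
  case (Cons k K)
  define xs' where "xs' = filter (\<lambda>x. fst x \<noteq> k) xs"
  have "map (\<lambda>k'. filter (\<lambda>x. fst x = k') xs) K = map (\<lambda>k'. filter (\<lambda>x. fst x = k') xs') K"
    using Cons.prems(3) by (intro map_cong) (auto simp: xs'_def intro!: filter_cong)
  moreover have "concat (map (\<lambda>k'. filter (\<lambda>x. fst x = k') xs') K) = xs'"
    using Cons.prems by (intro Cons.IH) (auto simp: xs'_def sorted_filter)
  moreover have "filter (\<lambda>x. fst x = k) xs @ xs' = xs"
    using Cons.prems unfolding xs'_def by (intro filter_least_key_append) auto
  ultimately show ?case by (metis concat.simps(2) list.map(2))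
qed simp

lemma runs_sorted_pairs_le:
  fixes xs ys :: "('k::linorder \<times> 'v::linorder) list"
  assumes ms: "mset xs = mset ys" and sx: "sorted (map fst xs)" and sy: "sorted ys"
  shows "runs (map snd ys) \<le> runs (map snd xs) + 2 * card (multivalued_keys (set xs))"
proof -
  define K where "K = sorted_list_of_set (fst ` set xs)"
  have K: "sorted K" "distinct K" "set K = fst ` set xs" by (auto simp: K_def)
  have "set xs = set ys" using ms by (metis set_mset_mset)
  moreover have "sorted (map fst ys)"
    using sy by (auto simp: sorted_map elim!: sorted_wrt_mono_rel[rotated])
  ultimately have xs_ys: "concat (map (\<lambda>k. filter (\<lambda>x. fst x = k) zs) K) = zs"
    if "zs = xs \<or> zs = ys" for zs
    using that concat_filter_keys[OF _ K(1,2)] K(3) sx by auto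
  define Gs where "Gs = map (\<lambda>k. map snd (filter (\<lambda>x. fst x = k) xs)) K"
  define Hs where "Hs = map (\<lambda>k. map snd (filter (\<lambda>x. fst x = k) ys)) K"
  have "concat Gs = map snd (concat (map (\<lambda>k. filter (\<lambda>x. fst x = k) xs) K))"
    "concat Hs = map snd (concat (map (\<lambda>k. filter (\<lambda>x. fst x = k) ys) K))"
    by (simp_all add: Gs_def Hs_def map_concat o_def)
  then have "concat Gs = map snd xs" "concat Hs = map snd ys"
    using xs_ys by simp_all
  moreover have "list_all2 (\<lambda>G H. mset G = mset H \<and> sorted H) Gs Hs"
    unfolding Gs_def Hs_def list_all2_map1 list_all2_map2
  proof (rule list_all2_refl)
    fix k
    have "sorted (filter (\<lambda>x. fst x = k) ys)" using sy by (rule sorted_wrt_filter)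
    then have "sorted (map snd (filter (\<lambda>x. fst x = k) ys))"
      by (auto simp: sorted_map elim!: sorted_wrt_mono_rel[rotated])
    then show "mset (map snd (filter (\<lambda>x. fst x = k) xs)) = mset (map snd (filter (\<lambda>x. fst x = k) ys))
        \<and> sorted (map snd (filter (\<lambda>x. fst x = k) ys))"
      using ms by (simp add: mset_filter)
  qed
  moreover have "length (filter nonconstant Gs) = card (multivalued_keys (set xs))"
  proof -
    have "set (filter (\<lambda>k. nonconstant (map snd (filter (\<lambda>x. fst x = k) xs))) K)
        = multivalued_keys (set xs)"
      using K(3) by (auto simp: multivalued_keys_def image_iff) (metis fst_conv)+
    then show ?thesis
      by (simp add: Gs_def filter_map o_def distinct_card[symmetric] K(2))
  qed
  ultimately show ?thesis using runs_concat_sorted_blocks[of Gs Hs] by simp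
qed

section \<open>Comparing separated words\<close>

lemma xchar_less_simps [simp]:
  "(Ch a < Ch b) = (a < b)" "(Ch a \<le> Ch b) = (a \<le> b)"
  "Dol i < Ch b" "Dol i \<le> Ch b" "\<not> Ch a < Dol i" "\<not> Ch a \<le> Dol i"
  "(Dol i < Dol j) = (i < j)" "(Dol i \<le> Dol j) = (i \<le> j)"
  "Hash \<le> x" "(x \<le> Hash) = (x = Hash)" "(Hash < x) = (x \<noteq> Hash)"
  for a b :: "'a::linorder"
  by (cases x; auto simp: less_eq_xchar_def less_xchar_def)+

lemma dol_str_eq_iff [simp]: "dol_str U = dol_str V \<longleftrightarrow> U = V"
  by (auto simp: dol_str_def inj_map_eq_map inj_def)

definition is_sep :: "'a xchar \<Rightarrow> bool" where
  "is_sep c \<longleftrightarrow> (\<forall>a. c \<noteq> Ch a)"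

lemma is_sep_simps [simp]: "\<not> is_sep (Ch a)" "is_sep (Dol i)" "is_sep Hash"
  by (auto simp: is_sep_def)

lemma sep_less_Ch: "is_sep d \<Longrightarrow> d < Ch a"
  by (cases d) auto

fun ch_prefix :: "'a xchar list \<Rightarrow> 'a list" where
  "ch_prefix (Ch a # r) = a # ch_prefix r"
| "ch_prefix _ = []"

lemma ch_prefix_Ch_sep [simp]: "is_sep d \<Longrightarrow> ch_prefix (map Ch V @ d # r) = V"
  by (induction V) (cases d; auto)+

lemma ch_prefix_decomp:
  "\<exists>x\<in>set R. is_sep x \<Longrightarrow> \<exists>d r. R = map Ch (ch_prefix R) @ d # r \<and> is_sep d"
proof (induction R)
  case (Cons x R)
  then show ?case by (cases x) force+
qed simp

lemma less_of_first_difference: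
  fixes u v :: "'b::linorder list"
  shows "p < length u \<Longrightarrow> p < length v \<Longrightarrow> take p u = take p v \<Longrightarrow> u ! p < v ! p \<Longrightarrow> u < v"
proof (induction p arbitrary: u v)
  case 0
  then show ?case by (cases u; cases v) auto
next
  case (Suc p)
  then show ?case by (cases u; cases v) auto
qed

lemma omega_less_of_first_difference:
  assumes "p < length u" "p < length v" "take p u = take p v" "u ! p < v ! p"
  shows "omega_less u v"
  unfolding omega_less_def lex_less_inf_def omega_def
proof (intro disjI2 exI[of _ p] conjI allI impI)
  fix i assume "i < p"
  with assms(1-3) show "u ! (i mod length u) = v ! (i mod length v)"
    by (metis mod_less nth_take order.strict_trans)
qed (use assms in simp)

text \<open>Separated words compare like the dollar-terminated versions of their letter prefixes,
  because every separator is smaller than every letter.\<close>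
lemma Ch_sep_first_difference:
  fixes V1 V2 :: "'a::linorder list"
  assumes "dol_str V1 < dol_str V2" "is_sep d1" "is_sep d2"
  shows "\<exists>p. p < length (map Ch V1 @ d1 # r1) \<and> p < length (map Ch V2 @ d2 # r2)
    \<and> take p (map Ch V1 @ d1 # r1) = take p (map Ch V2 @ d2 # r2)
    \<and> (map Ch V1 @ d1 # r1) ! p < (map Ch V2 @ d2 # r2) ! p"
  using assms(1)
proof (induction V1 arbitrary: V2)
  case Nil
  then show ?case
    using assms(2) by (cases V2) (auto simp: dol_str_def sep_less_Ch intro!: exI[of _ 0])
next
  case (Cons a V1)
  then obtain b V2' where V2: "V2 = b # V2'" by (cases V2) (auto simp: dol_str_def)
  show ?case
  proof (cases "a = b")
    case True
    with Cons.prems V2 have "dol_str V1 < dol_str V2'" by (simp add: dol_str_def)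
    from Cons.IH[OF this] obtain p where "p < length (map Ch V1 @ d1 # r1)"
      "p < length (map Ch V2' @ d2 # r2)" "take p (map Ch V1 @ d1 # r1) = take p (map Ch V2' @ d2 # r2)"
      "(map Ch V1 @ d1 # r1) ! p < (map Ch V2' @ d2 # r2) ! p" by blast
    with True V2 show ?thesis by (intro exI[of _ "Suc p"]) auto
  next
    case False
    with Cons.prems V2 show ?thesis by (intro exI[of _ 0]) (auto simp: dol_str_def)
  qed
qed

lemma Ch_sep_less:
  fixes V1 V2 :: "'a::linorder list"
  assumes "dol_str V1 < dol_str V2" "is_sep d1" "is_sep d2"
  shows "map Ch V1 @ d1 # r1 < map Ch V2 @ d2 # r2"
  using Ch_sep_first_difference[OF assms] less_of_first_difference by blast

lemma Ch_sep_omega_less: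
  fixes V1 V2 :: "'a::linorder list"
  assumes "dol_str V1 < dol_str V2" "is_sep d1" "is_sep d2"
  shows "omega_less (map Ch V1 @ d1 # r1) (map Ch V2 @ d2 # r2)"
  using Ch_sep_first_difference[OF assms] omega_less_of_first_difference by blast

lemma ch_prefix_key_less:
  fixes R1 R2 :: "'a::linorder xchar list"
  assumes "dol_str (ch_prefix R1) < dol_str (ch_prefix R2)" "\<exists>x\<in>set R1. is_sep x" "\<exists>x\<in>set R2. is_sep x"
  shows "R1 < R2" "omega_less R1 R2"
proof -
  obtain d1 r1 d2 r2 where "R1 = map Ch (ch_prefix R1) @ d1 # r1" "is_sep d1"
    "R2 = map Ch (ch_prefix R2) @ d2 # r2" "is_sep d2"
    using ch_prefix_decomp assms(2,3) by metis
  then show "R1 < R2" "omega_less R1 R2"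
    using Ch_sep_less[OF assms(1)] Ch_sep_omega_less[OF assms(1)] by metis+
qed

lemma Dol_le_Dol_after_common_prefix:
  "map Ch V @ Dol s1 # r1 \<le> map Ch V @ Dol s2 # r2 \<Longrightarrow> s1 \<le> s2"
  by (induction V) (auto simp: less_imp_le)

section \<open>Suffix items and interesting intervals\<close>

text \<open>One item per suffix U of T (from T itself down to the empty suffix): the key U$, with which
  the corresponding rotation of T$ begins, and the BWT character of that rotation.\<close>
definition suffix_items :: "'a list \<Rightarrow> ('a xchar list \<times> 'a xchar) list" where
  "suffix_items T = map (\<lambda>q. (dol_str (drop q T), prec_char T (drop q T))) [0..<Suc (length T)]"

definition all_suffix_items :: "'a list multiset \<Rightarrow> ('a xchar list \<times> 'a xchar) multiset" where
  "all_suffix_items M = (\<Sum>T\<in>#M. mset (suffix_items T))"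

lemma in_suffix_items: "(k, a) \<in> set (suffix_items T) \<longleftrightarrow> (\<exists>U. suffix U T \<and> k = dol_str U \<and> a = prec_char T U)"
proof
  assume "(k, a) \<in> set (suffix_items T)"
  then show "\<exists>U. suffix U T \<and> k = dol_str U \<and> a = prec_char T U"
    unfolding suffix_items_def using suffix_drop by (auto simp del: upt_Suc)
next
  assume "\<exists>U. suffix U T \<and> k = dol_str U \<and> a = prec_char T U"
  then obtain U W where "T = W @ U" "k = dol_str U" "a = prec_char T U" by (auto simp: suffix_def)
  then show "(k, a) \<in> set (suffix_items T)"
    unfolding suffix_items_def by (auto intro!: image_eqI[of _ _ "length W"])
qed

lemma in_all_suffix_items:
  "(k, a) \<in># all_suffix_items M \<longleftrightarrow> (\<exists>T\<in>#M. \<exists>U. suffix U T \<and> k = dol_str U \<and> a = prec_char T U)"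
  by (auto simp: all_suffix_items_def in_suffix_items)

lemma size_filter_mset_less:
  assumes "\<And>y. y \<in># A \<Longrightarrow> P y \<Longrightarrow> Q y" "x \<in># A" "Q x" "\<not> P x"
  shows "size (filter_mset P A) < size (filter_mset Q A)"
proof (rule mset_subset_size)
  have "filter_mset P A \<subseteq># filter_mset Q A"
    using assms(1) by (intro filter_mset_mono_strong) auto
  moreover have "x \<in># filter_mset Q A - filter_mset P A"
    using assms(2-4) by (simp add: in_diff_count)
  ultimately show "filter_mset P A \<subset># filter_mset Q A"
    by (metis diff_cancel subset_mset.less_le empty_iff set_mset_empty)
qed

lemma prefix_imp_less_eq: "prefix u v \<Longrightarrow> (u :: 'b::linorder list) \<le> v"
  by (induction u arbitrary: v) (auto simp: prefix_def)

lemma int_b_strict_mono: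
  fixes U1 U2 :: "'a::linorder list"
  assumes less: "dol_str U1 < dol_str U2" and "T \<in># M" "suffix U1 T"
  shows "int_b M U1 < int_b M U2"
proof -
  obtain W where W: "T = W @ U1" using assms(3) by (auto simp: suffix_def)
  define R where "R = dol_str U1 @ map Ch W"
  have "R = rotate (length W) (dol_str T)"
    unfolding R_def W dol_str_def by (metis append_assoc length_map map_append rotate_append)
  then have "R \<in> set (rotations (dol_str T))"
    unfolding rotations_def by (auto simp: W dol_str_def intro!: image_eqI[of _ _ "length W"])
  then have "R \<in># all_rots M"
    using assms(2) by (auto simp: all_rots_def)
  moreover have "R < dol_str U2"
    using Ch_sep_less[OF less, of "Dol 0" "Dol 0" "map Ch W" "[]"] by (simp add: R_def dol_str_def)
  moreover have "R' < dol_str U2 \<and> \<not> prefix (dol_str U2) R'"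
    if "R' < dol_str U1 \<and> \<not> prefix (dol_str U1) R'" for R'
    using that less by (meson le_less_trans less_trans not_less prefix_imp_less_eq)
  moreover have "\<not> prefix (dol_str U2) R"
    using \<open>R < dol_str U2\<close> prefix_imp_less_eq leD by blast
  moreover have "prefix (dol_str U1) R" by (simp add: R_def)
  ultimately show ?thesis
    unfolding int_b_def by (intro add_strict_left_mono size_filter_mset_less) blast+
qed

lemma two_le_size_mset:
  assumes "x \<in># A" "y \<in># A" "x \<noteq> y"
  shows "2 \<le> size A"
proof -
  obtain A' where A': "A = add_mset x A'" using multi_member_split[OF assms(1)] by blast
  with assms(2,3) have "A' \<noteq> {#}" by auto
  then show ?thesis by (simp add: A' Suc_le_eq nonempty_has_size)
qed

lemma card_multivalued_suffix_keys_le: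
  "card (multivalued_keys (set_mset (all_suffix_items M))) \<le> c_M M"
proof -
  define Suff where "Suff = {U. \<exists>T\<in>#M. suffix U T}"
  define S where "S = {U. \<exists>T\<in>#M. \<exists>T'\<in>#M. suffix U T \<and> suffix U T' \<and> prec_char T U \<noteq> prec_char T' U}"
  define I where "I = (\<lambda>U. (int_b M U, int_e M U))"
  have "finite Suff"
    by (rule finite_subset[of _ "\<Union>T\<in>set_mset M. set (suffixes T)"]) (auto simp: Suff_def)
  have "inj_on I Suff"
  proof (rule inj_onI)
    fix U1 U2 assume "U1 \<in> Suff" "U2 \<in> Suff" "I U1 = I U2"
    then obtain T1 T2 where "T1 \<in># M" "suffix U1 T1" "T2 \<in># M" "suffix U2 T2"
      "int_b M U1 = int_b M U2"
      by (auto simp: Suff_def I_def)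
    then show "U1 = U2"
      using int_b_strict_mono[of U1 U2 T1 M] int_b_strict_mono[of U2 U1 T2 M]
      by (metis dol_str_eq_iff less_irrefl linorder_neqE)
  qed
  then have inj_S: "inj_on I S" by (rule inj_on_subset) (auto simp: S_def Suff_def)
  have "I ` S \<subseteq> interesting_intervals M"
  proof
    fix x assume "x \<in> I ` S"
    then obtain U T T' where "x = I U" "T \<in># M" "T' \<in># M" "suffix U T" "suffix U T'"
      "prec_char T U \<noteq> prec_char T' U"
      unfolding S_def by blast
    moreover have "2 \<le> n_suff M U"
      unfolding n_suff_def using calculation by (intro two_le_size_mset[of T _ T']) auto
    ultimately show "x \<in> interesting_intervals M"
      unfolding interesting_intervals_def I_def by blast
  qed
  moreover have "interesting_intervals M \<subseteq> I ` Suff"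
    unfolding interesting_intervals_def I_def Suff_def by blast
  then have "finite (interesting_intervals M)"
    by (rule finite_surj[OF \<open>finite Suff\<close>])
  moreover have "multivalued_keys (set_mset (all_suffix_items M)) = dol_str ` S"
    by (auto simp: multivalued_keys_def in_all_suffix_items S_def) blast+
  moreover have "card (dol_str ` S) = card (I ` S)"
    using card_image[OF inj_S] card_image[of dol_str S] by (simp add: inj_on_def)
  ultimately show ?thesis
    unfolding c_M_def by (metis card_mono)
qed

section \<open>Rotations of separated texts\<close>

text \<open>The text T_1 d_1 ... T_k d_k of blocks (T_j, d_j) with separators Dol d_j. The mdolBWT uses
  d_j = j, the concBWT uses d_j = 0 followed by #, and the eBWT rotates single blocks (T, 0).
  Entry i of sep_items describes the rotation starting at position i: the letters up to the
  next separator, the index of that separator, and the preceding character, in which every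
  separator is read as $.\<close>
definition sep_text :: "('a list \<times> nat) list \<Rightarrow> 'a xchar list" where
  "sep_text bs = concat (map (\<lambda>(T, s). map Ch T @ [Dol s]) bs)"

definition sep_items :: "('a list \<times> nat) list \<Rightarrow> ('a list \<times> nat \<times> 'a xchar) list" where
  "sep_items bs = concat (map (\<lambda>(T, s).
     map (\<lambda>q. (drop q T, s, prec_char T (drop q T))) [0..<Suc (length T)]) bs)"

definition collapse_sep :: "'a xchar \<Rightarrow> 'a xchar" where
  "collapse_sep c = (if is_sep c then Dol 0 else c)"

lemma collapse_sep_simps [simp]: "collapse_sep (Ch a) = Ch a" "collapse_sep (Dol i) = Dol 0" "collapse_sep Hash = Dol 0"
  by (simp_all add: collapse_sep_def)

lemma prec_char_drop:
  "q \<le> length T \<Longrightarrow> prec_char T (drop q T) = (if q = 0 then Dol 0 else Ch (T ! (q - 1)))"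
  by (auto simp: prec_char_def dest: arg_cong[of _ _ length])

lemma drop_sep_text:
  assumes "i < length (sep_text bs)" "sep_items bs ! i = (V, s, p)"
  shows "(\<exists>r. drop i (sep_text bs) = map Ch V @ Dol s # r)
    \<and> (if i = 0 then Dol 0 else collapse_sep (sep_text bs ! (i - 1))) = p"
  using assms
proof (induction bs arbitrary: i)
  case (Cons b bs)
  obtain T s0 where b: "b = (T, s0)" by (cases b)
  have text_eq: "sep_text (b # bs) = map Ch T @ Dol s0 # sep_text bs"
    and items_eq: "sep_items (b # bs) = map (\<lambda>q. (drop q T, s0, prec_char T (drop q T))) [0..<Suc (length T)] @ sep_items bs"
    by (simp_all add: b sep_text_def sep_items_def)
  show ?case
  proof (cases "i \<le> length T")
    case True
    with Cons.prems(2) have "V = drop i T" "s = s0" "p = prec_char T (drop i T)"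
      by (auto simp: items_eq nth_append simp del: upt_Suc)
    with True show ?thesis
      by (auto simp: text_eq prec_char_drop nth_append drop_map)
  next
    case False
    define j where "j = i - Suc (length T)"
    have i: "i = Suc (length T) + j" using False by (simp add: j_def)
    have "j < length (sep_text bs)" "sep_items bs ! j = (V, s, p)"
      using Cons.prems by (simp_all add: i text_eq items_eq nth_append del: upt_Suc)
    from Cons.IH[OF this] show ?thesis
      by (cases j) (simp_all add: i text_eq nth_append)
  qed
qed (simp add: sep_text_def)

lemma length_sep_items: "length (sep_items bs) = length (sep_text bs)"
  by (induction bs) (auto simp: sep_items_def sep_text_def)

lemma last_sep_text: "sep_text bs \<noteq> [] \<Longrightarrow> is_sep (last (sep_text bs))"
  by (induction bs) (auto simp: sep_text_def split: prod.splits)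

definition sep_rotations :: "('a list \<times> nat) list \<Rightarrow> 'a xchar list \<Rightarrow> 'a xchar list list" where
  "sep_rotations bs z = map (\<lambda>i. rotate i (sep_text bs @ z)) [0..<length (sep_text bs)]"

definition rot_item :: "('a xchar \<Rightarrow> 'a xchar) \<Rightarrow> 'a xchar list \<Rightarrow> 'a xchar list \<times> 'a xchar" where
  "rot_item f R = (dol_str (ch_prefix R), f (last R))"

lemma rotate_sep_text:
  assumes "i < length (sep_text bs)" "sep_items bs ! i = (V, s, p)"
    and f: "\<forall>c\<in>set (sep_text bs @ z). f c = collapse_sep c" and z: "\<forall>c\<in>set z. is_sep c"
  shows "\<exists>r. rotate i (sep_text bs @ z) = map Ch V @ Dol s # r"
    and "f (last (rotate i (sep_text bs @ z))) = p"
proof -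
  define w where "w = sep_text bs"
  have rot: "rotate i (w @ z) = drop i w @ z @ take i w"
    using assms(1) by (simp add: w_def rotate_drop_take)
  obtain r where r: "drop i w = map Ch V @ Dol s # r"
    and p: "(if i = 0 then Dol 0 else collapse_sep (w ! (i - 1))) = p"
    using drop_sep_text[OF assms(1,2)] by (auto simp: w_def)
  from rot r show "\<exists>r. rotate i (sep_text bs @ z) = map Ch V @ Dol s # r"
    by (simp add: w_def)
  show "f (last (rotate i (sep_text bs @ z))) = p"
  proof (cases "i = 0")
    case True
    have "is_sep (last (w @ z))"
      using z last_sep_text[of bs] assms(1) by (cases "z = []") (force simp: w_def)+
    moreover have "last (w @ z) \<in> set (w @ z)"
      using assms(1) by (intro last_in_set) (auto simp: w_def)
    ultimately show ?thesis
      using True p f by (simp add: w_def collapse_sep_def)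
  next
    case False
    then have "take i w \<noteq> []" using assms(1) by (auto simp: w_def)
    then have "last (rotate i (w @ z)) = last (take i w)" unfolding rot by simp
    also have "\<dots> = w ! (i - 1)"
      using False assms(1) \<open>take i w \<noteq> []\<close> by (simp add: last_conv_nth w_def min_def)
    finally have "last (rotate i (w @ z)) = w ! (i - 1)" .
    moreover have "w ! (i - 1) \<in> set w" using assms(1) by (simp add: w_def)
    ultimately show ?thesis
      using False p f by (simp add: w_def)
  qed
qed

lemma sep_rotation_shape:
  assumes "R \<in> set (sep_rotations bs z)"
    and "\<forall>c\<in>set (sep_text bs @ z). f c = collapse_sep c" "\<forall>c\<in>set z. is_sep c"
  obtains V s r p where "R = map Ch V @ Dol s # r" "(V, s, p) \<in> set (sep_items bs)"
    "rot_item f R = (dol_str V, p)"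
proof -
  obtain i where i: "i < length (sep_text bs)" "R = rotate i (sep_text bs @ z)"
    using assms(1) by (auto simp: sep_rotations_def)
  obtain V s p where item: "sep_items bs ! i = (V, s, p)" by (metis prod_cases3)
  then have "(V, s, p) \<in> set (sep_items bs)" by (metis i(1) length_sep_items nth_mem)
  with rotate_sep_text[OF i(1) item assms(2,3)] i(2) show ?thesis
    by (auto simp: rot_item_def intro: that)
qed

lemma map_rot_item_sep_rotations:
  assumes "\<forall>c\<in>set (sep_text bs @ z). f c = collapse_sep c" "\<forall>c\<in>set z. is_sep c"
  shows "map (rot_item f) (sep_rotations bs z) = map (\<lambda>(V, s, p). (dol_str V, p)) (sep_items bs)"
proof (rule nth_equalityI)
  fix i assume "i < length (map (rot_item f) (sep_rotations bs z))"
  then have i: "i < length (sep_text bs)" by (simp add: sep_rotations_def)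
  obtain V s p where item: "sep_items bs ! i = (V, s, p)" by (metis prod_cases3)
  show "map (rot_item f) (sep_rotations bs z) ! i = map (\<lambda>(V, s, p). (dol_str V, p)) (sep_items bs) ! i"
    using rotate_sep_text[OF i item assms] i item
    by (auto simp: sep_rotations_def rot_item_def length_sep_items)
qed (simp add: sep_rotations_def length_sep_items)

lemma mset_sep_items:
  "mset (map (\<lambda>(V, s, p). (dol_str V, p)) (sep_items bs)) = all_suffix_items (mset (map fst bs))"
proof (induction bs)
  case (Cons b bs)
  obtain T s where "b = (T, s)" by (cases b)
  with Cons show ?case
    by (simp add: sep_items_def all_suffix_items_def suffix_items_def o_def del: upt_Suc)
qed (simp add: sep_items_def all_suffix_items_def)

lemma in_sep_items:
  "(V, s, p) \<in> set (sep_items bs) \<longleftrightarrow> (\<exists>T. (T, s) \<in> set bs \<and> suffix V T \<and> p = prec_char T V)"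
proof -
  have "(V, s, p) \<in> set (map (\<lambda>q. (drop q T, s0, prec_char T (drop q T))) [0..<Suc (length T)])
    \<longleftrightarrow> s = s0 \<and> suffix V T \<and> p = prec_char T V" for T :: "'a list" and s0
  proof
    assume "s = s0 \<and> suffix V T \<and> p = prec_char T V"
    then obtain W where "T = W @ V" "s = s0" "p = prec_char T V" by (auto simp: suffix_def)
    then show "(V, s, p) \<in> set (map (\<lambda>q. (drop q T, s0, prec_char T (drop q T))) [0..<Suc (length T)])"
      by (auto simp del: upt_Suc intro!: image_eqI[where x="length W"])
  qed (auto simp: suffix_drop simp del: upt_Suc)
  then show ?thesis by (force simp: sep_items_def)
qed

definition prec_mono_on_ties :: "('a::linorder list \<times> nat) list \<Rightarrow> bool" where
  "prec_mono_on_ties bs \<longleftrightarrow> (\<forall>V s1 s2 p1 p2. (V, s1, p1) \<in> set (sep_items bs) \<longrightarrow>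
     (V, s2, p2) \<in> set (sep_items bs) \<longrightarrow> s1 \<le> s2 \<longrightarrow> p1 \<le> p2)"

lemma sorted_rot_items:
  fixes bs :: "('a::linorder list \<times> nat) list"
  assumes "sorted Rs" "set Rs \<subseteq> set (sep_rotations bs z)"
    and f: "\<forall>c\<in>set (sep_text bs @ z). f c = collapse_sep c" and z: "\<forall>c\<in>set z. is_sep c"
  shows "sorted (map fst (map (rot_item f) Rs))"
    and "prec_mono_on_ties bs \<Longrightarrow> sorted (map (rot_item f) Rs)"
proof -
  have key_le: "dol_str V1 \<le> dol_str V2"
    if "map Ch V1 @ Dol s1 # r1 \<le> map Ch V2 @ Dol s2 # r2" for V1 V2 :: "'a list" and s1 r1 s2 r2
  proof (rule ccontr)
    assume "\<not> dol_str V1 \<le> dol_str V2"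
    then have "dol_str (ch_prefix (map Ch V2 @ Dol s2 # r2)) < dol_str (ch_prefix (map Ch V1 @ Dol s1 # r1))"
      by simp
    then have "map Ch V2 @ Dol s2 # r2 < map Ch V1 @ Dol s1 # r1"
      by (rule ch_prefix_key_less(1)) simp_all
    with that show False by simp
  qed
  have shape: "\<exists>V s r p. R = map Ch V @ Dol s # r \<and> (V, s, p) \<in> set (sep_items bs) \<and> rot_item f R = (dol_str V, p)"
    if "R \<in> set Rs" for R
  proof -
    from that assms(2) have "R \<in> set (sep_rotations bs z)" by blast
    from sep_rotation_shape[OF this f z] show ?thesis by metis
  qed
  have sorted_Rs: "sorted_wrt (\<le>) Rs" using assms(1) by simp
  show "sorted (map fst (map (rot_item f) Rs))"
    unfolding sorted_map map_map o_def
  proof (rule sorted_wrt_mono_rel[OF _ sorted_Rs])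
    fix R1 R2 assume R: "R1 \<in> set Rs" "R2 \<in> set Rs" "R1 \<le> R2"
    with shape[OF R(1)] shape[OF R(2)] key_le show "fst (rot_item f R1) \<le> fst (rot_item f R2)"
      by auto
  qed
  assume prec: "prec_mono_on_ties bs"
  show "sorted (map (rot_item f) Rs)"
    unfolding sorted_map
  proof (rule sorted_wrt_mono_rel[OF _ sorted_Rs])
    fix R1 R2 assume R: "R1 \<in> set Rs" "R2 \<in> set Rs" "R1 \<le> R2"
    obtain V1 s1 r1 p1 where
      1: "R1 = map Ch V1 @ Dol s1 # r1" "(V1, s1, p1) \<in> set (sep_items bs)" "rot_item f R1 = (dol_str V1, p1)"
      using shape[OF R(1)] by blast
    obtain V2 s2 r2 p2 where
      2: "R2 = map Ch V2 @ Dol s2 # r2" "(V2, s2, p2) \<in> set (sep_items bs)" "rot_item f R2 = (dol_str V2, p2)"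
      using shape[OF R(2)] by blast
    show "rot_item f R1 \<le> rot_item f R2"
    proof (cases "V1 = V2")
      case True
      with R(3) 1(1) 2(1) have "s1 \<le> s2" by (simp add: Dol_le_Dol_after_common_prefix)
      with prec 1(2) 2(2) True have "p1 \<le> p2" by (auto simp: prec_mono_on_ties_def)
      with 1(3) 2(3) True show ?thesis by simp
    next
      case False
      with key_le R(3) 1 2 show ?thesis by (simp add: order.strict_iff_order)
    qed
  qed
qed

section \<open>Separator-based BWTs list the suffix items\<close>

lemma prec_char_append: "prec_char (A @ V) V = (if A = [] then Dol 0 else Ch (last A))"
  by (cases A rule: rev_cases) (auto simp: prec_char_def nth_append)

lemma append_le_append_iff: "(u @ x \<le> u @ y) \<longleftrightarrow> (x :: 'b::linorder list) \<le> y"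
  by (induction u) auto

lemma prec_char_colex_mono:
  fixes T1 T2 V :: "'a::linorder list"
  assumes "suffix V T1" "suffix V T2" "rev T1 \<le> rev T2"
  shows "prec_char T1 V \<le> prec_char T2 V"
proof -
  obtain A1 A2 where A: "T1 = A1 @ V" "T2 = A2 @ V" using assms(1,2) by (auto simp: suffix_def)
  have "rev A1 \<le> rev A2" using assms(3) A by (simp add: append_le_append_iff)
  then show ?thesis
    unfolding A prec_char_append by (cases A1 rule: rev_cases; cases A2 rule: rev_cases) auto
qed

lemma mdolBWT_suffix_items:
  fixes xs :: "'a::linorder list list"
  obtains ys where "mset ys = all_suffix_items (mset xs)" "sorted (map fst ys)" "mdolBWT xs = map snd ys"
    "sorted (map rev xs) \<Longrightarrow> sorted ys"
proof -
  define bs where "bs = map (\<lambda>(j, T). (T, Suc j)) (enumerate 0 xs)"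
  have text_eq: "concat (map (\<lambda>(j, T). map Ch T @ [Dol (Suc j)]) (enumerate 0 xs)) = sep_text bs"
    by (simp add: bs_def sep_text_def case_prod_unfold o_def)
  have "map fst bs = xs" by (simp add: bs_def case_prod_beta o_def)
  have f: "\<forall>c\<in>set (sep_text bs @ []). ren_dol c = collapse_sep c"
    by (auto simp: sep_text_def ren_dol_def)
  have z: "\<forall>c\<in>set ([] :: 'a xchar list). is_sep c" by simp
  define Rs where "Rs = sep_rotations bs []"
  have "rotations (sep_text bs) = Rs" by (simp add: Rs_def rotations_def sep_rotations_def)
  define ys where "ys = map (rot_item ren_dol) (sort Rs)"
  have "mset ys = mset (map (rot_item ren_dol) Rs)" by (simp add: ys_def)
  also have "\<dots> = all_suffix_items (mset xs)"
    unfolding Rs_def map_rot_item_sep_rotations[OF f z] mset_sep_items \<open>map fst bs = xs\<close> ..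
  finally have "mset ys = all_suffix_items (mset xs)" .
  moreover have "sorted (map fst ys)"
    unfolding ys_def using sorted_rot_items(1)[OF _ _ f z] by (simp add: Rs_def)
  moreover have "mdolBWT xs = map snd ys"
    by (simp add: mdolBWT_def text_eq bwt_def \<open>rotations (sep_text bs) = Rs\<close> ys_def rot_item_def)
  moreover have "sorted ys" if "sorted (map rev xs)"
    unfolding ys_def
  proof (rule sorted_rot_items(2)[OF _ _ f z])
    show "prec_mono_on_ties bs"
      unfolding prec_mono_on_ties_def
    proof (intro allI impI)
      fix V s1 s2 p1 p2
      assume "(V, s1, p1) \<in> set (sep_items bs)" "(V, s2, p2) \<in> set (sep_items bs)" "s1 \<le> s2"
      then obtain j1 j2 where "j1 < length xs" "j2 < length xs" "j1 \<le> j2"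
        "suffix V (xs ! j1)" "suffix V (xs ! j2)" "p1 = prec_char (xs ! j1) V" "p2 = prec_char (xs ! j2) V"
        by (auto simp: in_sep_items bs_def in_set_enumerate_eq)
      moreover have "rev (xs ! j1) \<le> rev (xs ! j2)"
        using sorted_nth_mono[OF that \<open>j1 \<le> j2\<close>] calculation by simp
      ultimately show "p1 \<le> p2" by (simp add: prec_char_colex_mono)
    qed
  qed (simp_all add: Rs_def)
  ultimately show thesis by (rule that)
qed

lemma concBWT_suffix_items:
  fixes xs :: "'a::linorder list list"
  obtains ys where "mset ys = all_suffix_items (mset xs)" "sorted (map fst ys)" "concBWT xs = map snd ys"
proof -
  define bs where "bs = map (\<lambda>T. (T, 0 :: nat)) xs"
  define w where "w = sep_text bs"
  have "concat (map dol_str xs) = w"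
    by (simp add: w_def bs_def sep_text_def dol_str_def[abs_def] o_def)
  have "map fst bs = xs" by (simp add: bs_def o_def)
  have f: "\<forall>c\<in>set (sep_text bs @ [Hash]). ren_hash c = collapse_sep c"
    by (auto simp: bs_def sep_text_def ren_hash_def)
  have z: "\<forall>c\<in>set [Hash]. is_sep c" by simp
  define Rs where "Rs = sep_rotations bs [Hash]"
  have "rotations (w @ [Hash]) = Rs @ [Hash # w]"
    using rotate_append[of w "[Hash]"] by (simp add: rotations_def Rs_def sep_rotations_def w_def)
  moreover have "Hash # w < R" if R: "R \<in> set Rs" for R
  proof -
    obtain V s r where "R = map Ch V @ Dol s # r"
      using sep_rotation_shape[OF R[unfolded Rs_def] f z] by metis
    then show ?thesis by (cases V) auto
  qed
  then have "sort (Rs @ [Hash # w]) = (Hash # w) # sort Rs"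
    by (intro properties_for_sort) (auto simp: less_imp_le)
  ultimately have bwt_eq: "tl (bwt (concat (map dol_str xs) @ [Hash])) = map last (sort Rs)"
    by (simp add: bwt_def \<open>concat (map dol_str xs) = w\<close>)
  define ys where "ys = map (rot_item ren_hash) (sort Rs)"
  have "mset ys = mset (map (rot_item ren_hash) Rs)" by (simp add: ys_def)
  also have "\<dots> = all_suffix_items (mset xs)"
    unfolding Rs_def map_rot_item_sep_rotations[OF f z] mset_sep_items \<open>map fst bs = xs\<close> ..
  finally have "mset ys = all_suffix_items (mset xs)" .
  moreover have "sorted (map fst ys)"
    unfolding ys_def using sorted_rot_items(1)[OF _ _ f z] by (simp add: Rs_def)
  moreover have "concBWT xs = map snd ys"
    by (simp add: concBWT_def bwt_eq ys_def rot_item_def)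
  ultimately show thesis by (rule that)
qed

lemma mset_rot_items_dol_str:
  "image_mset (rot_item id) (mset (rotations (dol_str T))) = mset (suffix_items T)"
proof -
  have f: "\<forall>c\<in>set (sep_text [(T, 0)] @ []). id c = collapse_sep c"
    by (auto simp: sep_text_def)
  have z: "\<forall>c\<in>set ([] :: 'a xchar list). is_sep c" by simp
  have "rotations (dol_str T) = sep_rotations [(T, 0)] []"
    by (simp add: rotations_def sep_rotations_def sep_text_def dol_str_def)
  then have "image_mset (rot_item id) (mset (rotations (dol_str T)))
      = mset (map (\<lambda>(V, s, p). (dol_str V, p)) (sep_items [(T, 0)]))"
    unfolding mset_map[symmetric] by (simp only: map_rot_item_sep_rotations[OF f z])
  also have "\<dots> = mset (suffix_items T)"
    unfolding mset_sep_items by (simp add: all_suffix_items_def)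
  finally show ?thesis .
qed

lemma dolEBWT_suffix_items:
  fixes M :: "'a::linorder list multiset"
  assumes "is_dolEBWT M L"
  obtains ys where "mset ys = all_suffix_items M" "sorted (map fst ys)" "L = map snd ys"
proof -
  obtain Rs where Rs: "mset Rs = (\<Sum>S\<in>#image_mset dol_str M. mset (rotations S))"
    "sorted_wrt (\<lambda>a b. \<not> omega_less b a) Rs" "L = map last Rs"
    using assms unfolding is_dolEBWT_def is_ebwt_def by blast
  have sep: "\<exists>x\<in>set R. is_sep x" if "R \<in> set Rs" for R
  proof -
    have "R \<in># (\<Sum>S\<in>#image_mset dol_str M. mset (rotations S))"
      using that Rs(1) by (metis set_mset_mset)
    then obtain T where "R \<in> set (rotations (dol_str T))" by auto
    then show ?thesis by (auto simp: rotations_def dol_str_def)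
  qed
  define ys where "ys = map (rot_item id) Rs"
  have "mset ys = (\<Sum>T\<in>#M. image_mset (rot_item id) (mset (rotations (dol_str T))))"
    unfolding ys_def mset_map Rs(1) by (induction M) simp_all
  then have "mset ys = all_suffix_items M"
    by (simp add: mset_rot_items_dol_str all_suffix_items_def)
  moreover have "sorted (map fst ys)"
    unfolding ys_def sorted_map map_map o_def
  proof (rule sorted_wrt_mono_rel[OF _ Rs(2)])
    fix R1 R2 assume R: "R1 \<in> set Rs" "R2 \<in> set Rs" "\<not> omega_less R2 R1"
    show "fst (rot_item id R1) \<le> fst (rot_item id R2)"
      unfolding rot_item_def fst_conv
    proof (rule ccontr)
      assume "\<not> dol_str (ch_prefix R1) \<le> dol_str (ch_prefix R2)"
      then have "omega_less R2 R1"
        using sep[OF R(1)] sep[OF R(2)] by (intro ch_prefix_key_less(2)) auto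
      with R(3) show False ..
    qed
  qed
  moreover have "L = map snd ys" by (simp add: Rs(3) ys_def rot_item_def)
  ultimately show thesis by (rule that)
qed

lemma sep_bwt_suffix_items:
  assumes "L \<in> sep_bwts M"
  obtains ys where "mset ys = all_suffix_items M" "sorted (map fst ys)" "L = map snd ys"
proof -
  consider "is_dolEBWT M L" | xs where "mset xs = M" "L = mdolBWT xs"
    | xs where "mset xs = M" "L = concBWT xs"
    using assms unfolding sep_bwts_def by blast
  then show thesis
    by cases (metis dolEBWT_suffix_items mdolBWT_suffix_items concBWT_suffix_items that)+
qed

lemma colexBWT_suffix_items:
  fixes M :: "'a::linorder list multiset"
  obtains ys where "mset ys = all_suffix_items M" "sorted ys" "colexBWT M = map snd ys"
proof -
  have "mset (colex_listing M) = M" "sorted (map rev (colex_listing M))"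
    by (simp_all add: colex_listing_def)
  then show thesis
    using mdolBWT_suffix_items[of "colex_listing M"] that unfolding colexBWT_def by metis
qed

lemma r_opt_attained:
  obtains L where "L \<in> sep_bwts M" "r_opt M = runs L"
proof -
  have "colexBWT M \<in> sep_bwts M"
    unfolding sep_bwts_def colexBWT_def by (auto simp: colex_listing_def)
  moreover have "runs ` sep_bwts M \<subseteq> {..size (all_suffix_items M)}"
    by (auto simp: runs_def elim!: sep_bwt_suffix_items)
      (metis le_trans length_map remdups_adj_length size_mset)
  then have "finite (runs ` sep_bwts M)" by (rule finite_subset) simp
  ultimately show thesis
    using that unfolding r_opt_def by (metis Min_in empty_iff image_iff image_is_empty)
qed

theorem proposition2:
  fixes M :: "'a::linorder list multiset"
  shows "runs (colexBWT M) \<le> r_opt M + 2 * c_M M"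
proof -
  obtain yc where yc: "mset yc = all_suffix_items M" "sorted yc" "colexBWT M = map snd yc"
    by (rule colexBWT_suffix_items)
  obtain L ys where L: "r_opt M = runs L"
    and ys: "mset ys = all_suffix_items M" "sorted (map fst ys)" "L = map snd ys"
    by (metis r_opt_attained sep_bwt_suffix_items)
  have "runs (map snd yc) \<le> runs (map snd ys) + 2 * card (multivalued_keys (set ys))"
    using ys yc by (intro runs_sorted_pairs_le) simp_all
  moreover have "set ys = set_mset (all_suffix_items M)" by (metis ys(1) set_mset_mset)
  ultimately show ?thesis
    using card_multivalued_suffix_keys_le[of M] yc(3) ys(3) L by simp
qed

end
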